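(* Let $S\subseteq\mathbb{R}^d$ be a finite set, and suppose every pair $\{p_1,p_2\}$ of distinct points of $S$ is coloured red or blue in such a way that the distance between the points of any blue pair is strictly more than $3$ times the distance between the points of any red pair. Let $B$ be a largest blue clique in $S$ (a subset all of whose pairs are blue). Then $S$ can be partitioned into $|B|$ vertex-disjoint red cliques $R_1,\dots,R_{|B|}$ (subsets all of whose pairs are red) such that (1) each $R_i$ shares exactly one point with $B$, and (2) if $p\in R_i$, $q\in R_j$ with $i\ne j$, then $\{p,q\}$ is blue. *)

theory Defs
  imports "HOL-Analysis.Analysis"
begin

text \<open>A red/blue colouring of the unordered pairs of distinct points is modelled by
  a predicate on two-element sets: the pair {p,q} is blue iff blue {p,q}, red otherwise.\<close>

definition blue_clique :: "('a set \<Rightarrow> bool) \<Rightarrow> 'a set \<Rightarrow> bool" where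
  "blue_clique blue C \<longleftrightarrow> (\<forall>p\<in>C. \<forall>q\<in>C. p \<noteq> q \<longrightarrow> blue {p, q})"

definition red_clique :: "('a set \<Rightarrow> bool) \<Rightarrow> 'a set \<Rightarrow> bool" where
  "red_clique blue C \<longleftrightarrow> (\<forall>p\<in>C. \<forall>q\<in>C. p \<noteq> q \<longrightarrow> \<not> blue {p, q})"

end

theory Submission
  imports Defs
begin

text \<open>If blue distances exceed twice the red ones, the triangle inequality shows that
  "red or equal" is transitive, hence an equivalence relation on S. Its classes are red
  cliques and any two points in different classes form a blue pair, so a blue clique meets
  each class at most once, and a largest one meets every class (otherwise a point of a
  missed class could be added to it). The classes through the points of B are the R i.\<close>

definition red_rel :: "('a set \<Rightarrow> bool) \<Rightarrow> 'a set \<Rightarrow> 'a rel" where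
  "red_rel blue S = {(p, q). p \<in> S \<and> q \<in> S \<and> (p = q \<or> \<not> blue {p, q})}"

lemma red_rel_iff:
  "(p, q) \<in> red_rel blue S \<longleftrightarrow> p \<in> S \<and> q \<in> S \<and> (p = q \<or> \<not> blue {p, q})"
  by (simp add: red_rel_def)

lemma trans_red_rel:
  fixes S :: "'a::metric_space set"
  assumes sep: "\<And>p1 p2 q1 q2. p1 \<in> S \<Longrightarrow> p2 \<in> S \<Longrightarrow> q1 \<in> S \<Longrightarrow> q2 \<in> S \<Longrightarrow>
               p1 \<noteq> p2 \<Longrightarrow> q1 \<noteq> q2 \<Longrightarrow> blue {p1, p2} \<Longrightarrow> \<not> blue {q1, q2} \<Longrightarrow>
               dist p1 p2 > c * dist q1 q2"
    and "c \<ge> 2"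
  shows "trans (red_rel blue S)"
proof (rule transI)
  fix x y z assume xy: "(x, y) \<in> red_rel blue S" and yz: "(y, z) \<in> red_rel blue S"
  then have S: "x \<in> S" "y \<in> S" "z \<in> S" by (simp_all add: red_rel_iff)
  show "(x, z) \<in> red_rel blue S"
  proof (rule ccontr)
    assume "(x, z) \<notin> red_rel blue S"
    then have xz: "x \<noteq> z" "blue {x, z}" using S by (auto simp: red_rel_iff)
    then have "x \<noteq> y" "y \<noteq> z" "\<not> blue {x, y}" "\<not> blue {y, z}"
      using xy yz by (auto simp: red_rel_iff)
    then have "dist x z > c * dist x y" "dist x z > c * dist y z"
      using sep[of x z] S xz by auto
    moreover have "2 * dist x y \<le> c * dist x y" "2 * dist y z \<le> c * dist y z"
      using \<open>c \<ge> 2\<close> by (simp_all add: mult_right_mono)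
    moreover have "dist x z \<le> dist x y + dist y z" by (rule dist_triangle)
    ultimately show False by linarith
  qed
qed

lemma equiv_red_rel:
  assumes "trans (red_rel blue S)"
  shows "equiv S (red_rel blue S)"
proof (rule equivI)
  show "sym (red_rel blue S)" by (auto intro!: symI simp: red_rel_iff insert_commute)
qed (use assms in \<open>auto intro!: refl_onI simp: red_rel_iff\<close>)

lemma red_class_red_clique:
  assumes "equiv S (red_rel blue S)"
  shows "red_clique blue (red_rel blue S `` {a})"
  unfolding red_clique_def
proof (intro ballI impI)
  fix p q assume "p \<in> red_rel blue S `` {a}" "q \<in> red_rel blue S `` {a}" "p \<noteq> q"
  then have "(p, q) \<in> red_rel blue S"
    using assms by (elim equivE) (blast dest: symD transD)
  then show "\<not> blue {p, q}" using \<open>p \<noteq> q\<close> by (simp add: red_rel_iff)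
qed

lemma blue_across_red_classes:
  assumes "equiv S (red_rel blue S)" and "(a, b) \<notin> red_rel blue S"
    and p: "p \<in> red_rel blue S `` {a}" and q: "q \<in> red_rel blue S `` {b}"
  shows "blue {p, q}"
proof -
  have "(p, q) \<notin> red_rel blue S"
    using assms by (elim equivE) (blast dest: symD transD)
  moreover have "p \<in> S" "q \<in> S" using p q by (auto simp: red_rel_iff)
  ultimately show ?thesis by (auto simp: red_rel_iff)
qed

lemma red_class_inter_blue_clique:
  assumes "blue_clique blue B" "B \<subseteq> S" "b \<in> B"
  shows "red_rel blue S `` {b} \<inter> B = {b}"
  using assms by (fastforce simp: blue_clique_def red_rel_iff)

lemma red_classes_of_largest_blue_clique:
  assumes "finite B" "B \<subseteq> S" "blue_clique blue B"
    and largest: "\<And>C. C \<subseteq> S \<Longrightarrow> blue_clique blue C \<Longrightarrow> card C \<le> card B"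
  shows "(\<Union>b\<in>B. red_rel blue S `` {b}) = S"
proof
  show "(\<Union>b\<in>B. red_rel blue S `` {b}) \<subseteq> S" by (auto simp: red_rel_iff)
  show "S \<subseteq> (\<Union>b\<in>B. red_rel blue S `` {b})"
  proof
    fix x assume "x \<in> S"
    show "x \<in> (\<Union>b\<in>B. red_rel blue S `` {b})"
    proof (rule ccontr)
      assume "x \<notin> (\<Union>b\<in>B. red_rel blue S `` {b})"
      then have new: "\<forall>b\<in>B. x \<noteq> b \<and> blue {x, b}"
        using \<open>B \<subseteq> S\<close> \<open>x \<in> S\<close> by (auto simp: red_rel_iff insert_commute)
      then have "blue_clique blue (insert x B)"
        using \<open>blue_clique blue B\<close> by (auto simp: blue_clique_def insert_commute)
      then have "card (insert x B) \<le> card B" using largest \<open>B \<subseteq> S\<close> \<open>x \<in> S\<close> by blast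
      with new \<open>finite B\<close> show False by auto
    qed
  qed
qed

theorem lemma1:
  fixes S :: "'a::euclidean_space set" and blue :: "'a set \<Rightarrow> bool" and B :: "'a set"
  assumes "finite S"
    and sep: "\<And>p1 p2 q1 q2. p1 \<in> S \<Longrightarrow> p2 \<in> S \<Longrightarrow> q1 \<in> S \<Longrightarrow> q2 \<in> S \<Longrightarrow>
               p1 \<noteq> p2 \<Longrightarrow> q1 \<noteq> q2 \<Longrightarrow> blue {p1, p2} \<Longrightarrow> \<not> blue {q1, q2} \<Longrightarrow>
               dist p1 p2 > 3 * dist q1 q2"
    and "B \<subseteq> S" and "blue_clique blue B"
    and largest: "\<And>C. C \<subseteq> S \<Longrightarrow> blue_clique blue C \<Longrightarrow> card C \<le> card B"
  shows "\<exists>R :: nat \<Rightarrow> 'a set.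
           (\<Union>i<card B. R i) = S
         \<and> (\<forall>i<card B. \<forall>j<card B. i \<noteq> j \<longrightarrow> R i \<inter> R j = {})
         \<and> (\<forall>i<card B. red_clique blue (R i))
         \<and> (\<forall>i<card B. card (R i \<inter> B) = 1)
         \<and> (\<forall>i<card B. \<forall>j<card B. i \<noteq> j \<longrightarrow> (\<forall>p\<in>R i. \<forall>q\<in>R j. blue {p, q}))"
proof -
  let ?r = "red_rel blue S"
  have equiv: "equiv S ?r" by (rule equiv_red_rel, rule trans_red_rel[OF sep]) auto
  have "finite B" using \<open>finite S\<close> \<open>B \<subseteq> S\<close> by (rule finite_subset[rotated])
  then obtain f where f: "bij_betw f {..<card B} B"
    by (metis bij_betw_from_nat_into_finite lessThan_atLeast0)
  have meets_B: "?r `` {f i} \<inter> B = {f i}" if "i < card B" for i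
    using red_class_inter_blue_clique[OF assms(4,3)] bij_betwE[OF f] that by blast
  have unrelated: "(f i, f j) \<notin> ?r" if "i < card B" "j < card B" "i \<noteq> j" for i j
  proof
    assume "(f i, f j) \<in> ?r"
    then have "f j \<in> ?r `` {f i} \<inter> B" using bij_betwE[OF f] that by blast
    then have "f j = f i" using meets_B[OF that(1)] by blast
    with f that show False by (auto simp: bij_betw_def inj_on_def)
  qed
  have "(\<Union>i<card B. ?r `` {f i}) = (\<Union>b\<in>f ` {..<card B}. ?r `` {b})"
    by (simp add: image_image)
  also have "\<dots> = S"
    using red_classes_of_largest_blue_clique[OF \<open>finite B\<close> assms(3,4) largest] f
    by (simp only: bij_betw_def)
  finally have cover: "(\<Union>i<card B. ?r `` {f i}) = S" .
  show ?thesis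
  proof (intro exI[of _ "\<lambda>i. ?r `` {f i}"] conjI allI impI ballI)
    fix i j assume "i < card B" "j < card B" "i \<noteq> j"
    then have "(f i, f j) \<notin> ?r" by (rule unrelated)
    then show "?r `` {f i} \<inter> ?r `` {f j} = {}"
      using disjnt_equiv_class[OF equiv] by (simp add: disjnt_def)
    show "blue {p, q}" if "p \<in> ?r `` {f i}" "q \<in> ?r `` {f j}" for p q
      using blue_across_red_classes[OF equiv \<open>(f i, f j) \<notin> ?r\<close> that] .
  qed (use cover meets_B red_class_red_clique[OF equiv] in auto)
qed

end
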